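(* Let $q$ be a prime power such that none of $q-1$, $q$, $q+1$ is a power of $2$ (i.e. $\{q-1,q,q+1\}\cap\{2^k : k\in\mathbb{N}\}=\varnothing$), and let $G=\mathrm{SL}(2,q)$. If $x$ is a $2$-element of $G$, then $q-1$ or $q+1$ divides $|C_G(x)|$. In particular, $C_G(x)$ is not a $2$-group. *)

theory Defs
  imports "HOL-Analysis.Analysis"
begin

definition SL2 :: "('a::field ^ 2 ^ 2) set" where
  "SL2 = {A. det A = 1}"

primrec mpow :: "'a::semiring_1 ^ 'n ^ 'n \<Rightarrow> nat \<Rightarrow> 'a ^ 'n ^ 'n" where
  "mpow A 0 = mat 1"
| "mpow A (Suc n) = A ** mpow A n"

definition two_element :: "'a::semiring_1 ^ 'n ^ 'n \<Rightarrow> bool" where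
  "two_element x \<longleftrightarrow> (\<exists>k. mpow x (2 ^ k) = mat 1)"

definition centralizer_SL2 :: "'a::field ^ 2 ^ 2 \<Rightarrow> ('a ^ 2 ^ 2) set" where
  "centralizer_SL2 x = {g \<in> SL2. g ** x = x ** g}"

end

theory Submission
  imports Defs "HOL-Computational_Algebra.Primes"
begin

(*
  Let q = |F|. In characteristic 2 a finite field has 2-power order, so the hypotheses force
  odd characteristic. If x is scalar its centralizer is all of SL(2,q), of order q(q-1)(q+1).
  Otherwise the centralizer of x consists of the matrices a I + b x of determinant
  a^2 + t a b + b^2 = 1, where t is the trace of x. A 2-element of trace 2e with e = +-1
  has the form e (I + N) with N^2 = 0; since 2^k is invertible, x^(2^k) = I forces N = 0
  and x is scalar. Hence t^2 <> 4, and completing the square turns the conic into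
  u^2 - d b^2 = 1 with d <> 0, which has q - 1 points if d is a square and q + 1 otherwise.
*)

lemma card_subgroup_times_two_power:
  fixes S :: "'a::{ab_group_add,finite} set"
  assumes add_self: "\<And>x::'a. x + x = 0"
    and "0 \<in> S" and "\<And>x y. x \<in> S \<Longrightarrow> y \<in> S \<Longrightarrow> x + y \<in> S"
  shows "\<exists>k. card S * 2 ^ k = CARD('a)"
  using assms(2,3)
proof (induction "card (- S)" arbitrary: S rule: less_induct)
  case less
  show ?case
  proof (cases "S = UNIV")
    case True
    then show ?thesis by (intro exI[of _ 0]) simp
  next
    case False
    then obtain a where a: "a \<notin> S" by blast
    define S' where "S' = S \<union> (+) a ` S"
    have "0 \<in> S'" using less.prems(1) by (simp add: S'_def)
    moreover have "x + y \<in> S'" if "x \<in> S'" "y \<in> S'" for x y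
    proof -
      have "a + a + z = z" for z using add_self[of a] by simp
      then show ?thesis
        using that less.prems(2) unfolding S'_def by (auto simp: ac_simps)
    qed
    moreover have "card (- S') < card (- S)"
    proof (rule psubset_card_mono)
      have "a \<in> S'" using less.prems(1) by (force simp: S'_def)
      then show "- S' \<subset> - S" using a by (auto simp: S'_def)
    qed simp
    ultimately obtain k where k: "card S' * 2 ^ k = CARD('a)"
      using less.hyps by blast
    have "S \<inter> (+) a ` S = {}"
    proof (rule ccontr)
      assume "S \<inter> (+) a ` S \<noteq> {}"
      then obtain s where "s \<in> S" "a + s \<in> S" by blast
      then have "(a + s) + s \<in> S" using less.prems(2) by blast
      then show False using a add_self[of s] by (simp add: add.assoc)
    qed
    then have "card S' = 2 * card S"
      by (simp add: S'_def card_Un_disjoint card_image)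
    with k show ?thesis by (intro exI[of _ "Suc k"]) (simp add: ac_simps)
  qed
qed

lemma card_two_power_if_char_two:
  assumes "(2::'a::{field,finite}) = 0"
  shows "\<exists>k. CARD('a) = 2 ^ k"
proof -
  have "x + x = 0" for x :: 'a
    using assms by (metis mult_2 mult_zero_left)
  from card_subgroup_times_two_power[of "{0}", OF this] show ?thesis
    by (auto intro: sym)
qed

definition mat2 :: "'a \<Rightarrow> 'a \<Rightarrow> 'a \<Rightarrow> 'a \<Rightarrow> 'a^2^2" where
  "mat2 a b c d = (\<chi> i j. if i = 1 then (if j = 1 then a else b) else (if j = 1 then c else d))"

lemma mat2_nth [simp]:
  "mat2 a b c d $ 1 $ 1 = a" "mat2 a b c d $ 1 $ 2 = b"
  "mat2 a b c d $ 2 $ 1 = c" "mat2 a b c d $ 2 $ 2 = d"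
  by (simp_all add: mat2_def)

lemma mat2_entries: "mat2 (A$1$1) (A$1$2) (A$2$1) (A$2$2) = A"
  by (simp add: vec_eq_iff forall_2)

lemma mat2_cases:
  obtains a b c d where "A = mat2 a b c d"
  by (metis mat2_entries)

lemma mat2_eq_iff [simp]:
  "mat2 a b c d = mat2 a' b' c' d' \<longleftrightarrow> a = a' \<and> b = b' \<and> c = c' \<and> d = d'"
  by (metis mat2_nth)

lemma mat2_mult [simp]:
  fixes a :: "'a::semiring_1"
  shows "mat2 a b c d ** mat2 e f g h = mat2 (a*e + b*g) (a*f + b*h) (c*e + d*g) (c*f + d*h)"
  by (simp add: vec_eq_iff forall_2 matrix_matrix_mult_def sum_2)

lemma det_mat2 [simp]: "det (mat2 a b c d) = a*d - b*c"
  by (simp add: det_2)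

lemma trace_mat2 [simp]: "trace (mat2 a b c (d::'a::semiring_1)) = a + d"
  by (simp add: trace_def sum_2)

lemma mat_eq_mat2: "(mat c :: 'a::zero^2^2) = mat2 c 0 0 c"
  by (simp add: vec_eq_iff forall_2 mat_def)

lemma card_det_eq_one_row:
  fixes a b :: "'a::{field,finite}"
  assumes "(a, b) \<noteq> (0, 0)"
  shows "card {(c, d). a*d - b*c = 1} = CARD('a)"
proof (cases "a = 0")
  case True
  with assms have "b \<noteq> 0" by simp
  with True have "{(c, d). a*d - b*c = 1} = {-1/b} \<times> UNIV"
    by (auto simp: field_simps minus_equation_iff[of _ 1])
  then show ?thesis by (simp add: card_cartesian_product)
next
  case False
  then have "{(c, d). a*d - b*c = 1} = (\<lambda>c. (c, (1 + b*c)/a)) ` UNIV"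
    by (auto simp: field_simps)
  moreover have "inj (\<lambda>c. (c, (1 + b*c)/a))"
    by (rule injI) simp
  ultimately show ?thesis
    by (metis card_image)
qed

lemma card_SL2:
  "card (SL2 :: ('a::{field,finite}^2^2) set) = CARD('a) * (CARD('a) - 1) * (CARD('a) + 1)"
proof -
  let ?q = "CARD('a)"
  let ?rows = "UNIV - {(0, 0)} :: ('a \<times> 'a) set"
  let ?M = "SIGMA (a, b):?rows. {(c, d). a*d - b*c = 1}"
  let ?f = "\<lambda>((a, b), c, d). mat2 a b c d"
  have SL2_eq: "SL2 = ?f ` ?M"
  proof (intro equalityI subsetI)
    fix A :: "'a^2^2"
    assume "A \<in> SL2"
    moreover obtain a b c d where A: "A = mat2 a b c d" by (rule mat2_cases)
    ultimately have "a*d - b*c = 1" by (simp add: SL2_def)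
    then show "A \<in> ?f ` ?M"
      unfolding A by (intro image_eqI[of _ _ "((a, b), c, d)"]) auto
  next
    fix A
    assume "A \<in> ?f ` ?M"
    then obtain a b c d where "A = mat2 a b c d" "a*d - b*c = 1" by auto
    then show "A \<in> SL2" by (simp add: SL2_def)
  qed
  have "inj_on ?f ?M"
    by (auto intro: inj_onI)
  then have "card (SL2 :: ('a^2^2) set) = card ?M"
    unfolding SL2_eq by (rule card_image)
  also have "\<dots> = (\<Sum>r\<in>?rows. ?q)"
  proof -
    have "card ((\<lambda>(a, b). {(c, d). a*d - b*c = 1}) r) = ?q" if "r \<in> ?rows" for r
      using that card_det_eq_one_row by (cases r) auto
    then show ?thesis by (simp add: card_SigmaI)
  qed
  also have "\<dots> = (?q * ?q - 1) * ?q"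
    by (simp add: card_Diff_singleton card_cartesian_product flip: UNIV_Times_UNIV)
  also have "\<dots> = ?q * (?q - 1) * (?q + 1)"
    by (simp add: algebra_simps)
  finally show ?thesis .
qed

lemma card_mult_eq_one: "card {(u, v). u * v = (1::'a::{field,finite})} = CARD('a) - 1"
proof -
  have "{(u, v). u * v = (1::'a)} = (\<lambda>u. (u, 1/u)) ` (UNIV - {0})"
    by (auto simp: image_iff field_simps)
  moreover have "inj (\<lambda>u::'a. (u, 1/u))"
    by (rule injI) simp
  ultimately show ?thesis
    by (simp add: card_image inj_on_subset card_Diff_singleton)
qed

lemma card_conic_square:
  fixes e :: "'a::{field,finite}"
  assumes two: "(2::'a) \<noteq> 0" and "e \<noteq> 0"
  shows "card {(u, b). u^2 - e^2 * b^2 = (1::'a)} = CARD('a) - 1"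
proof -
  have four: "(4::'a) \<noteq> 0" using two by (metis mult_2 mult_eq_0_iff numeral_Bit0)
  let ?f = "\<lambda>(u, b). (u - e*b, u + e*b)"
  let ?g = "\<lambda>(s, t). ((s + t)/2, (t - s)/(2*e))"
  have "bij_betw ?f {(u, b). u^2 - e^2 * b^2 = 1} {(s, t). s * t = 1}"
  proof (rule bij_betwI[where g = ?g])
    show "?f \<in> {(u, b). u^2 - e^2 * b^2 = 1} \<rightarrow> {(s, t). s * t = 1}"
      by (auto simp: power2_eq_square algebra_simps)
    show "?g \<in> {(s, t). s * t = 1} \<rightarrow> {(u, b). u^2 - e^2 * b^2 = 1}"
      using assms four by (auto simp: power2_eq_square field_simps)
    show "?g (?f x) = x" for x
      using assms four by (cases x) (auto simp: field_simps)
    show "?f (?g y) = y" for y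
      using assms four by (cases y) (auto simp: field_simps)
  qed
  then show ?thesis
    by (simp add: bij_betw_same_card card_mult_eq_one)
qed

(* Inverse of the projection (u, b) \<mapsto> d b / (u - 1) of the conic u^2 - d b^2 = 1 from its point (1, 0). *)
definition conic_param :: "'a::field \<Rightarrow> 'a \<Rightarrow> 'a \<times> 'a" where
  "conic_param d m = ((m^2 + d)/(m^2 - d), 2*m/(m^2 - d))"

lemma range_conic_param:
  fixes d :: "'a::field"
  assumes two: "(2::'a) \<noteq> 0" and nonsquare: "\<forall>e. e^2 \<noteq> d"
  shows "range (conic_param d) = {(u, b). u^2 - d * b^2 = 1} - {(1, 0)}"
proof (intro equalityI subsetI)
  have "d \<noteq> 0" using nonsquare by (metis zero_power2)
  fix y
  assume "y \<in> range (conic_param d)"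
  then obtain m where y: "y = conic_param d m" by blast
  have nz: "m^2 - d \<noteq> 0" using nonsquare by auto
  have "((m^2 + d)/(m^2 - d))^2 - d * (2*m/(m^2 - d))^2 = ((m^2 + d)^2 - d * (2*m)^2)/(m^2 - d)^2"
    by (simp add: power_divide diff_divide_distrib)
  also have "(m^2 + d)^2 - d * (2*m)^2 = (m^2 - d)^2"
    by (simp add: algebra_simps power2_eq_square)
  finally have "((m^2 + d)/(m^2 - d))^2 - d * (2*m/(m^2 - d))^2 = 1"
    using nz by simp
  moreover have "(m^2 + d)/(m^2 - d) \<noteq> 1"
    using nz \<open>d \<noteq> 0\<close> two by (simp add: field_simps)
  ultimately show "y \<in> {(u, b). u^2 - d * b^2 = 1} - {(1, 0)}"
    unfolding y conic_param_def by blast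
next
  fix y
  assume y_mem: "y \<in> {(u, b). u^2 - d * b^2 = 1} - {(1, 0)}"
  obtain u b where y: "y = (u, b)" by fastforce
  from y_mem y have C: "u^2 - d * b^2 = 1" and "(u, b) \<noteq> (1, 0)" by auto
  have "u \<noteq> 1"
  proof
    assume "u = 1"
    with C have "d * b^2 = 0" by simp
    with nonsquare have "b = 0" by (metis zero_power2 mult_eq_0_iff power_eq_0_iff)
    with \<open>u = 1\<close> \<open>(u, b) \<noteq> (1, 0)\<close> show False by simp
  qed
  define m where "m = d*b/(u - 1)"
  have "m * (u - 1) = d * b"
    using \<open>u \<noteq> 1\<close> by (simp add: m_def)
  with C have "(m^2 + d - u * (m^2 - d)) * (u - 1) = 0" and "(2*m - b * (m^2 - d)) * (u - 1) = 0"
    by algebra+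
  with \<open>u \<noteq> 1\<close> have "m^2 + d = u * (m^2 - d)" and "2*m = b * (m^2 - d)"
    by simp_all
  moreover have "m^2 - d \<noteq> 0" using nonsquare by auto
  ultimately have "conic_param d m = y"
    by (simp add: y conic_param_def field_simps)
  then show "y \<in> range (conic_param d)" by (metis rangeI)
qed

lemma inj_conic_param:
  fixes d :: "'a::field"
  assumes two: "(2::'a) \<noteq> 0" and nonsquare: "\<forall>e. e^2 \<noteq> d"
  shows "inj (conic_param d)"
proof (rule inj_on_inverseI)
  fix m
  have "d \<noteq> 0" using nonsquare by (metis zero_power2)
  have nz: "m^2 - d \<noteq> 0" using nonsquare by auto
  have "(m^2 + d)/(m^2 - d) - 1 = 2*d/(m^2 - d)"
    using nz by (simp add: field_simps)
  moreover have "2*d/(m^2 - d) \<noteq> 0"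
    using nz \<open>d \<noteq> 0\<close> two by simp
  moreover have "d * (2*m/(m^2 - d)) = m * (2*d/(m^2 - d))"
    by (simp add: field_simps)
  ultimately show "(\<lambda>(u, b). d*b/(u - 1)) (conic_param d m) = m"
    by (simp add: conic_param_def)
qed

lemma card_conic_nonsquare:
  fixes d :: "'a::{field,finite}"
  assumes two: "(2::'a) \<noteq> 0" and nonsquare: "\<forall>e. e^2 \<noteq> d"
  shows "card {(u, b). u^2 - d * b^2 = (1::'a)} = CARD('a) + 1"
proof -
  let ?C = "{(u, b). u^2 - d * b^2 = (1::'a)}"
  have "card (?C - {(1, 0)}) = CARD('a)"
    using range_conic_param[OF assms] inj_conic_param[OF assms] by (metis card_image)
  moreover have "(1, 0) \<in> ?C"
    by simp
  ultimately show ?thesis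
    by (metis card_Suc_Diff1 finite Suc_eq_plus1)
qed

lemma card_conic_trace:
  fixes t :: "'a::{field,finite}"
  assumes two: "(2::'a) \<noteq> 0" and "t^2 \<noteq> 4"
  shows "card {(\<alpha>, \<beta>). \<alpha>^2 + t*\<alpha>*\<beta> + \<beta>^2 = (1::'a)} \<in> {CARD('a) - 1, CARD('a) + 1}"
proof -
  define d where "d = t^2/4 - 1"
  have four: "(4::'a) \<noteq> 0" using two by (metis mult_2 mult_eq_0_iff numeral_Bit0)
  have "d \<noteq> 0" using assms four by (simp add: d_def field_simps)
  let ?f = "\<lambda>(\<alpha>, \<beta>). (\<alpha> + t*\<beta>/2, \<beta>)"
  have complete_square: "(\<alpha> + t*\<beta>/2)^2 - d*\<beta>^2 = \<alpha>^2 + t*\<alpha>*\<beta> + \<beta>^2" for \<alpha> \<beta>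
  proof -
    have "(\<alpha> + t*\<beta>/2)^2 = \<alpha>^2 + 2*\<alpha>*(t*\<beta>/2) + (t*\<beta>/2)^2"
      by (simp add: power2_sum)
    also have "2*\<alpha>*(t*\<beta>/2) = t*\<alpha>*\<beta>"
      using two by simp
    also have "(t*\<beta>/2)^2 = t^2/4 * \<beta>^2"
      by (simp add: power_divide power_mult_distrib)
    finally show ?thesis
      by (simp add: d_def algebra_simps)
  qed
  have "bij_betw ?f {(\<alpha>, \<beta>). \<alpha>^2 + t*\<alpha>*\<beta> + \<beta>^2 = 1} {(u, \<beta>). u^2 - d*\<beta>^2 = 1}"
  proof (rule bij_betwI[where g = "\<lambda>(u, \<beta>). (u - t*\<beta>/2, \<beta>)"])
    show "(\<lambda>(u, \<beta>). (u - t*\<beta>/2, \<beta>)) \<in> {(u, \<beta>). u^2 - d*\<beta>^2 = 1} \<rightarrow> {(\<alpha>, \<beta>). \<alpha>^2 + t*\<alpha>*\<beta> + \<beta>^2 = 1}"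
      using complete_square[of "u - t*\<beta>/2" \<beta> for u \<beta>] by auto
  qed (use complete_square in auto)
  moreover have "card {(u, \<beta>). u^2 - d*\<beta>^2 = (1::'a)} \<in> {CARD('a) - 1, CARD('a) + 1}"
  proof (cases "\<exists>e. e^2 = d")
    case True
    then obtain e where "d = e^2" by auto
    with \<open>d \<noteq> 0\<close> card_conic_square[OF two, of e] show ?thesis by simp
  next
    case False
    with card_conic_nonsquare[OF two, of d] show ?thesis by simp
  qed
  ultimately show ?thesis
    by (simp add: bij_betw_same_card)
qed

lemma centralizer_SL2_mat: "centralizer_SL2 (mat c :: 'a::field^2^2) = SL2"
proof -
  have "g ** mat c = mat c ** g" for g :: "'a^2^2"
  proof -
    obtain a b d e where "g = mat2 a b d e" by (rule mat2_cases)
    then show ?thesis by (simp add: mat_eq_mat2 mult.commute)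
  qed
  then show ?thesis by (simp add: centralizer_SL2_def)
qed

lemma commute_mat2_nonscalar:
  fixes p q r w :: "'a::field"
  assumes nonscalar: "\<not> (q = 0 \<and> r = 0 \<and> p = w)"
    and comm: "mat2 a b c d ** mat2 p q r w = mat2 p q r w ** mat2 a b c d"
  obtains \<alpha> \<beta> where "a = \<alpha> + \<beta>*p" "b = \<beta>*q" "c = \<beta>*r" "d = \<alpha> + \<beta>*w"
proof -
  from comm have "a*p + b*r = p*a + q*c" and e2: "a*q + b*w = p*b + q*d"
    and e3: "c*p + d*r = r*a + w*c"
    by (simp_all only: mat2_mult mat2_eq_iff)
  then have e1: "b*r = q*c"
    by (simp add: mult.commute)
  have "\<exists>\<beta>. b = \<beta>*q \<and> c = \<beta>*r \<and> a - d = \<beta>*(p - w)"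
  proof (cases "q = 0")
    case False
    with e1 e2 show ?thesis by (intro exI[of _ "b/q"]) (auto simp: field_simps)
  next
    case q: True
    show ?thesis
    proof (cases "r = 0")
      case False
      with q e1 e3 show ?thesis by (intro exI[of _ "c/r"]) (auto simp: field_simps)
    next
      case True
      with q nonscalar e2 e3 show ?thesis
        by (intro exI[of _ "(a - d)/(p - w)"]) (auto simp: field_simps)
    qed
  qed
  then obtain \<beta> where "b = \<beta>*q" "c = \<beta>*r" "a - d = \<beta>*(p - w)"
    by blast
  then show thesis
    by (intro that[of "a - \<beta>*p" \<beta>]) (simp_all add: algebra_simps)
qed

lemma det_mat2_pencil:
  fixes p q r w :: "'a::comm_ring_1"
  assumes "p*w - q*r = 1"
  shows "det (mat2 (\<alpha> + \<beta>*p) (\<beta>*q) (\<beta>*r) (\<alpha> + \<beta>*w)) = \<alpha>^2 + (p + w) * \<alpha> * \<beta> + \<beta>^2"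
proof -
  have "det (mat2 (\<alpha> + \<beta>*p) (\<beta>*q) (\<beta>*r) (\<alpha> + \<beta>*w)) = \<alpha>^2 + (p + w) * \<alpha> * \<beta> + \<beta>^2 * (p*w - q*r)"
    by (simp add: algebra_simps power2_eq_square)
  with assms show ?thesis by simp
qed

lemma centralizer_SL2_mat2_nonscalar:
  fixes p q r w :: "'a::field"
  assumes det: "p*w - q*r = 1" and nonscalar: "\<not> (q = 0 \<and> r = 0 \<and> p = w)"
  shows "centralizer_SL2 (mat2 p q r w) =
    (\<lambda>(\<alpha>, \<beta>). mat2 (\<alpha> + \<beta>*p) (\<beta>*q) (\<beta>*r) (\<alpha> + \<beta>*w)) `
      {(\<alpha>, \<beta>). \<alpha>^2 + (p + w) * \<alpha> * \<beta> + \<beta>^2 = 1}"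
    (is "_ = ?f ` ?C")
proof (intro equalityI subsetI)
  fix g
  assume g: "g \<in> centralizer_SL2 (mat2 p q r w)"
  obtain a b c d where g_eq: "g = mat2 a b c d" by (rule mat2_cases)
  from g have "mat2 a b c d ** mat2 p q r w = mat2 p q r w ** mat2 a b c d"
    by (simp only: centralizer_SL2_def g_eq mem_Collect_eq)
  then obtain \<alpha> \<beta> where "a = \<alpha> + \<beta>*p" "b = \<beta>*q" "c = \<beta>*r" "d = \<alpha> + \<beta>*w"
    by (rule commute_mat2_nonscalar[OF nonscalar])
  then have "g = ?f (\<alpha>, \<beta>)" by (simp add: g_eq)
  moreover from g have "det g = 1" by (simp add: centralizer_SL2_def SL2_def)
  ultimately show "g \<in> ?f ` ?C" using det_mat2_pencil[OF det] by auto
next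
  fix g
  assume "g \<in> ?f ` ?C"
  then obtain \<alpha> \<beta> where g: "g = ?f (\<alpha>, \<beta>)" "(\<alpha>, \<beta>) \<in> ?C" by blast
  then have "det g = 1" using det_mat2_pencil[OF det] by simp
  moreover have "g ** mat2 p q r w = mat2 p q r w ** g" by (simp add: g algebra_simps)
  ultimately show "g \<in> centralizer_SL2 (mat2 p q r w)" by (simp add: centralizer_SL2_def SL2_def)
qed

lemma inj_mat2_pencil:
  fixes p q r w :: "'a::field"
  assumes nonscalar: "\<not> (q = 0 \<and> r = 0 \<and> p = w)"
  shows "inj (\<lambda>(\<alpha>, \<beta>). mat2 (\<alpha> + \<beta>*p) (\<beta>*q) (\<beta>*r) (\<alpha> + \<beta>*w))"
proof (rule injI)
  fix u v :: "'a \<times> 'a"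
  obtain \<alpha> \<beta> \<alpha>' \<beta>' where uv: "u = (\<alpha>, \<beta>)" "v = (\<alpha>', \<beta>')" by fastforce
  assume "(\<lambda>(\<alpha>, \<beta>). mat2 (\<alpha> + \<beta>*p) (\<beta>*q) (\<beta>*r) (\<alpha> + \<beta>*w)) u =
    (\<lambda>(\<alpha>, \<beta>). mat2 (\<alpha> + \<beta>*p) (\<beta>*q) (\<beta>*r) (\<alpha> + \<beta>*w)) v"
  with uv have eqs: "\<alpha> + \<beta>*p = \<alpha>' + \<beta>'*p" "\<beta>*q = \<beta>'*q" "\<beta>*r = \<beta>'*r" "\<alpha> + \<beta>*w = \<alpha>' + \<beta>'*w"
    by simp_all
  then have "(\<alpha> + \<beta>*p) - (\<alpha> + \<beta>*w) = (\<alpha>' + \<beta>'*p) - (\<alpha>' + \<beta>'*w)"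
    by simp
  then have "(\<beta> - \<beta>') * (p - w) = 0"
    by (simp add: algebra_simps)
  with eqs nonscalar have "\<beta> = \<beta>'" by auto
  with eqs uv show "u = v" by simp
qed

lemma card_centralizer_SL2_nonscalar:
  fixes x :: "'a::field^2^2"
  assumes "x \<in> SL2" and "\<forall>c. x \<noteq> mat c"
  shows "card (centralizer_SL2 x) = card {(\<alpha>, \<beta>). \<alpha>^2 + trace x * \<alpha> * \<beta> + \<beta>^2 = 1}"
proof -
  obtain p q r w where x: "x = mat2 p q r w" by (rule mat2_cases)
  have det: "p*w - q*r = 1" using assms(1) by (simp add: x SL2_def)
  have nonscalar: "\<not> (q = 0 \<and> r = 0 \<and> p = w)" using assms(2) by (auto simp: x mat_eq_mat2)
  show ?thesis
    unfolding x centralizer_SL2_mat2_nonscalar[OF det nonscalar] trace_mat2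
    by (rule card_image[OF inj_on_subset[OF inj_mat2_pencil[OF nonscalar]]]) simp
qed

(* The matrix is \<epsilon> (I + N) with N = \<epsilon> x - I, and N^2 = 0 by Cayley-Hamilton; so its n-th power is \<epsilon>^n (I + n N). *)
lemma mpow_mat2_unipotent:
  fixes p q r w \<epsilon> :: "'a::field"
  assumes "\<epsilon>^2 = 1" and "p + w = 2*\<epsilon>" and "p*w - q*r = 1"
  shows "mpow (mat2 p q r w) n =
    mat2 (\<epsilon>^n * (1 + of_nat n * (\<epsilon>*p - 1))) (\<epsilon>^n * (of_nat n * (\<epsilon>*q)))
         (\<epsilon>^n * (of_nat n * (\<epsilon>*r))) (\<epsilon>^n * (1 + of_nat n * (\<epsilon>*w - 1)))"
proof (induction n)
  case 0
  show ?case by (simp add: mat_eq_mat2)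
next
  case (Suc n)
  define E N where "E = \<epsilon>^n" and "N = (of_nat n :: 'a)"
  have "mpow (mat2 p q r w) (Suc n) =
    mat2 p q r w ** mat2 (E * (1 + N * (\<epsilon>*p - 1))) (E * (N * (\<epsilon>*q)))
                         (E * (N * (\<epsilon>*r))) (E * (1 + N * (\<epsilon>*w - 1)))"
    by (simp add: Suc.IH E_def N_def)
  also have "\<dots> =
    mat2 (\<epsilon>*E * (1 + (1 + N) * (\<epsilon>*p - 1))) (\<epsilon>*E * ((1 + N) * (\<epsilon>*q)))
         (\<epsilon>*E * ((1 + N) * (\<epsilon>*r))) (\<epsilon>*E * (1 + (1 + N) * (\<epsilon>*w - 1)))"
    unfolding mat2_mult mat2_eq_iff by (intro conjI) (use assms in algebra)+
  finally show ?case
    by (simp add: E_def N_def)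
qed

lemma two_element_SL2_scalar_if_trace_square_eq_4:
  fixes x :: "'a::field^2^2"
  assumes two: "(2::'a) \<noteq> 0" and "x \<in> SL2" and "two_element x" and "(trace x)^2 = 4"
  shows "\<exists>c. x = mat c"
proof -
  obtain p q r w where x: "x = mat2 p q r w" by (rule mat2_cases)
  have det: "p*w - q*r = 1" using assms(2) by (simp add: x SL2_def)
  have "(p + w)^2 = 2^2"
    using assms(4) by (simp add: x)
  then have "p + w = 2 \<or> p + w = -2"
    by (simp only: power2_eq_iff)
  then obtain \<epsilon> :: 'a where \<epsilon>: "\<epsilon>^2 = 1" "p + w = 2*\<epsilon>"
    by (elim disjE) (auto intro: that[of 1] that[of "-1"])
  obtain k where k: "mpow x (2^k) = mat 1"
    using assms(3) by (auto simp: two_element_def)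
  define n :: 'a where "n = of_nat (2^k)"
  have "n \<noteq> 0" using two by (simp add: n_def)
  moreover have "\<epsilon> \<noteq> 0" using \<epsilon>(1) by auto
  moreover have entries: "\<epsilon>^(2^k) * (1 + n * (\<epsilon>*p - 1)) = 1" "\<epsilon>^(2^k) * (n * (\<epsilon>*q)) = 0"
    "\<epsilon>^(2^k) * (n * (\<epsilon>*r)) = 0" "\<epsilon>^(2^k) * (1 + n * (\<epsilon>*w - 1)) = 1"
    using k mpow_mat2_unipotent[OF \<epsilon> det, of "2^k"] by (simp_all add: x n_def mat_eq_mat2)
  moreover from entries(1,4) \<open>\<epsilon> \<noteq> 0\<close> have "1 + n * (\<epsilon>*p - 1) = 1 + n * (\<epsilon>*w - 1)"
    by (metis mult_left_cancel power_not_zero)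
  ultimately have "q = 0" "r = 0" "p = w"
    by auto
  then show ?thesis by (auto simp: x mat_eq_mat2)
qed

theorem theorem6p5:
  fixes x :: "'a::{field,finite} ^ 2 ^ 2"
  assumes "\<forall>k. CARD('a) - 1 \<noteq> 2 ^ k"
      and "\<forall>k. CARD('a) \<noteq> 2 ^ k"
      and "\<forall>k. CARD('a) + 1 \<noteq> 2 ^ k"
      and "x \<in> SL2"
      and "two_element x"
  shows "((CARD('a) - 1) dvd card (centralizer_SL2 x) \<or> (CARD('a) + 1) dvd card (centralizer_SL2 x))
         \<and> \<not> (\<exists>k. card (centralizer_SL2 x) = 2 ^ k)"
proof -
  let ?q = "CARD('a)"
  have two: "(2::'a) \<noteq> 0"
    using card_two_power_if_char_two assms(2) by blast
  show ?thesis
  proof (cases "\<exists>c. x = mat c")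
    case True
    then have "card (centralizer_SL2 x) = ?q * (?q - 1) * (?q + 1)"
      by (auto simp: centralizer_SL2_mat card_SL2)
    moreover have "?q * (?q - 1) * (?q + 1) \<noteq> 2^k" for k
    proof
      assume "?q * (?q - 1) * (?q + 1) = 2^k"
      then have "?q dvd 2^k" by (metis dvd_mult2 dvd_triv_left)
      with assms(2) show False by (auto simp: divides_primepow_nat)
    qed
    ultimately show ?thesis by simp
  next
    case False
    with two_element_SL2_scalar_if_trace_square_eq_4[OF two assms(4,5)]
    have "(trace x)^2 \<noteq> 4" by blast
    with card_centralizer_SL2_nonscalar[OF assms(4)] False card_conic_trace[OF two]
    have "card (centralizer_SL2 x) \<in> {?q - 1, ?q + 1}" by auto
    with assms(1,3) show ?thesis by (metis dvd_refl empty_iff insert_iff)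
  qed
qed

end
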